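(* Let $B_n$ be the number of bidirectional ballot sequences of length $n$. Then $B_n=\Omega(2^n/n)$.
   Context: A 0-1 sequence of length $n$ is a bidirectional ballot sequence if every nonempty prefix and every nonempty suffix of it contains strictly more 1's than 0's. *)

theory Defs
  imports Complex_Main "HOL-Library.Landau_Symbols"
begin

(* A 0-1 sequence is a list of booleans: True encodes 1, False encodes 0. *)
definition ones :: "bool list \<Rightarrow> nat" where
  "ones xs = length (filter (\<lambda>b. b) xs)"

definition zeros :: "bool list \<Rightarrow> nat" where
  "zeros xs = length (filter (\<lambda>b. \<not> b) xs)"

definition bidirectional_ballot :: "bool list \<Rightarrow> bool" where
  "bidirectional_ballot xs \<longleftrightarrow>
     (\<forall>k. 1 \<le> k \<and> k \<le> length xs \<longrightarrow>
        zeros (take k xs) < ones (take k xs) \<and> zeros (drop (length xs - k) xs) < ones (drop (length xs - k) xs))"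

definition B :: "nat \<Rightarrow> nat" where
  "B n = card {xs :: bool list. length xs = n \<and> bidirectional_ballot xs}"

end

theory Submission
  imports Defs "HOL-Library.Discrete_Functions"
begin

text \<open>Read a 0-1 sequence as a walk with steps \<open>\<plusminus>1\<close>. Call a walk of length \<open>2p\<close> a ballot half if
  it stays nonnegative, ends at height at least \<open>2q\<close> and never rises more than \<open>2q\<close> above its
  final height. For ballot halves \<open>x\<close> and \<open>y\<close>, the walk \<open>1 x (rev y) 1\<close> stays strictly between
  \<open>0\<close> and its final height except at its ends, i.e. it is a bidirectional ballot sequence, so
  \<open>B (4p + 2)\<close> is at least the square of the number of ballot halves. Reflecting after the
  first visit to \<open>-1\<close>, resp. after the last visit to the final height plus \<open>2q + 1\<close>, shows that
  there are at least \<open>C(2p, p + q) - C(2p, p + 2q + 1)\<close> ballot halves; for \<open>q \<approx> \<surd>p / 4\<close> this is at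
  least \<open>C(2p, p) / 32\<close>, and \<open>C(2p, p)\<^sup>2 \<ge> 16\<^sup>p / (4p)\<close>. Monotonicity of \<open>B\<close> fills the gaps.\<close>

section \<open>Walks\<close>

fun height :: "bool list \<Rightarrow> int" where
  "height [] = 0"
| "height (b # xs) = (if b then 1 else -1) + height xs"

lemma height_append [simp]: "height (xs @ ys) = height xs + height ys"
  by (induction xs) auto

lemma height_rev [simp]: "height (rev xs) = height xs"
  by (induction xs) auto

lemma height_map_Not [simp]: "height (map Not xs) = - height xs"
  by (induction xs) auto

lemma height_eq_ones: "height xs = 2 * int (ones xs) - int (length xs)"
  unfolding ones_def by (induction xs) auto

lemma height_eq_ones_minus_zeros: "height xs = int (ones xs) - int (zeros xs)"
  unfolding ones_def zeros_def by (induction xs) auto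

lemma ones_le_length: "ones xs \<le> length xs"
  by (simp add: ones_def)

lemma ones_map_Not: "ones (map Not xs) = length xs - ones xs"
  using height_eq_ones[of xs] height_eq_ones[of "map Not xs"] by simp

lemma height_drop: "height (drop i xs) = height xs - height (take i xs)"
  using height_append[of "take i xs" "drop i xs"] by simp

lemma height_take_Suc:
  "i < length xs \<Longrightarrow> height (take (Suc i) xs) = height (take i xs) + (if xs ! i then 1 else -1)"
  by (simp add: take_Suc_conv_app_nth)

lemma finite_paths: "finite {xs :: bool list. length xs = L \<and> P xs}"
  using finite_lists_length_eq[of "UNIV :: bool set" L] by (auto intro: rev_finite_subset)

lemma card_paths_ones: "card {xs. length xs = L \<and> ones xs = k} = L choose k"
proof (induction L arbitrary: k)
  case 0
  have "{xs. length xs = 0 \<and> ones xs = k} = (if k = 0 then {[]} else {})"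
    by (auto simp: ones_def)
  then show ?case by simp
next
  case (Suc L)
  let ?S = "\<lambda>k. {xs. length xs = L \<and> ones xs = k}"
  have split: "{xs. length xs = Suc L \<and> ones xs = k} =
      (if k = 0 then {} else (#) True ` ?S (k - 1)) \<union> (#) False ` ?S k"
    by (auto simp: length_Suc_conv ones_def split: if_splits)
  have "card ((#) b ` ?S k') = L choose k'" for b k'
    using Suc.IH by (simp add: card_image)
  moreover have "(#) True ` ?S k' \<inter> (#) False ` ?S k = {}" for k' by auto
  ultimately show ?case
    unfolding split by (cases k) (simp_all add: card_Un_disjoint finite_paths)
qed

lemma height_take_intermediate:
  assumes "i \<le> j" "j \<le> length xs" "height (take j xs) \<le> c" "c \<le> height (take i xs)"
  shows "\<exists>k. i \<le> k \<and> k \<le> j \<and> height (take k xs) = c"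
  using assms
proof (induction j)
  case 0
  then show ?case by auto
next
  case (Suc j)
  show ?case
  proof (cases "i = Suc j \<or> height (take (Suc j) xs) = c")
    case True
    then show ?thesis using Suc.prems by auto
  next
    case False
    then have "height (take j xs) \<le> c"
      using Suc.prems height_take_Suc[of j xs] by (auto split: if_splits)
    then show ?thesis using Suc False by fastforce
  qed
qed

section \<open>Reflection\<close>

definition visits :: "int \<Rightarrow> bool list \<Rightarrow> nat set" where
  "visits c xs = {i. i \<le> length xs \<and> height (take i xs) = c}"

definition nonnegative :: "bool list \<Rightarrow> bool" where
  "nonnegative xs \<longleftrightarrow> (\<forall>i \<le> length xs. 0 \<le> height (take i xs))"

definition flip_from :: "nat \<Rightarrow> bool list \<Rightarrow> bool list" where
  "flip_from t xs = take t xs @ map Not (drop t xs)"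

lemma finite_visits [simp]: "finite (visits c xs)"
  unfolding visits_def by simp

lemma nonnegative_iff_no_visit: "nonnegative xs \<longleftrightarrow> visits (-1) xs = {}"
proof
  assume "visits (-1) xs = {}"
  then show "nonnegative xs"
    using height_take_intermediate[of 0 _ xs "-1"]
    unfolding nonnegative_def visits_def by fastforce
qed (auto simp: nonnegative_def visits_def)

lemma nonnegative_height: "nonnegative xs \<Longrightarrow> 0 \<le> height xs"
  unfolding nonnegative_def by (metis order.refl take_all)

lemma length_flip_from [simp]: "length (flip_from t xs) = length xs"
  by (simp add: flip_from_def)

lemma flip_from_flip_from [simp]: "flip_from t (flip_from t xs) = xs"
  by (cases "t \<le> length xs") (auto simp: flip_from_def comp_def)

lemma height_take_flip_from:
  assumes "t \<le> length xs"
  shows "height (take i (flip_from t xs)) =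
    (if i \<le> t then height (take i xs) else 2 * height (take t xs) - height (take i xs))"
proof (cases "i \<le> t")
  case False
  then have "take i xs = take t xs @ take (i - t) (drop t xs)"
    by (metis le_add_diff_inverse nat_le_linear take_add)
  moreover have "take i (flip_from t xs) = take t xs @ map Not (take (i - t) (drop t xs))"
    using False assms by (simp add: flip_from_def take_map)
  ultimately show ?thesis using False by simp
qed (use assms in \<open>simp add: flip_from_def\<close>)

text \<open>Reflecting the rest of a walk at one of its visits to level \<open>c\<close> maps heights
  \<open>h \<mapsto> 2c - h\<close>, which fixes exactly the level \<open>c\<close>; so the visits to \<open>c\<close>, and in particular
  the first and the last one, are unchanged and the reflection can be undone.\<close>

lemma visits_flip_from:
  assumes "t \<in> visits c xs"
  shows "visits c (flip_from t xs) = visits c xs"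
  using assms by (auto simp: visits_def height_take_flip_from)

lemma height_flip_from:
  assumes "t \<in> visits c xs"
  shows "height (flip_from t xs) = 2 * c - height xs"
  using assms height_take_flip_from[of t xs "length xs"]
  by (cases "length xs \<le> t") (auto simp: visits_def)

lemma ones_flip_from_visit_minus_one:
  assumes "t \<in> visits (-1) xs"
  shows "ones (flip_from t xs) + ones xs + 1 = length xs"
  using height_flip_from[OF assms] height_eq_ones[of xs] height_eq_ones[of "flip_from t xs"]
  by simp

lemma card_paths_ones_less_eq_card_paths_ones_greater:
  "card {xs. length xs = L \<and> ones xs + a < L} = card {xs. length xs = L \<and> a < ones xs}"
proof (rule bij_betw_same_card, rule bij_betw_byWitness[where f' = "map Not"])
  have "a < ones (map Not xs) \<longleftrightarrow> ones xs + a < length xs"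
    "ones (map Not xs) + a < length xs \<longleftrightarrow> a < ones xs" for xs
    using ones_le_length[of xs] by (auto simp: ones_map_Not)
  then show "map Not ` {xs. length xs = L \<and> ones xs + a < L} \<subseteq> {xs. length xs = L \<and> a < ones xs}"
    "map Not ` {xs. length xs = L \<and> a < ones xs} \<subseteq> {xs. length xs = L \<and> ones xs + a < L}"
    by (auto simp: comp_def)
qed (auto simp: comp_def)

text \<open>The reflection principle: reflecting after the first visit to \<open>-1\<close> is an involution
  on the walks that go negative, and it turns \<open>k\<close> ones into \<open>L - 1 - k\<close> ones.\<close>

lemma card_negative_paths:
  assumes "L \<le> 2 * a"
  shows "card {xs. length xs = L \<and> \<not> nonnegative xs \<and> a \<le> ones xs}
    = card {xs. length xs = L \<and> ones xs + a < L}"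
proof (rule bij_betw_same_card)
  let ?R = "\<lambda>xs. flip_from (Min (visits (-1) xs)) xs"
  have first_visit: "Min (visits (-1) xs) \<in> visits (-1) xs" if "\<not> nonnegative xs" for xs
    using that by (simp add: nonnegative_iff_no_visit)
  have R_R: "?R (?R xs) = xs" if "\<not> nonnegative xs" for xs
    using visits_flip_from[OF first_visit[OF that]] by simp
  have R_negative: "\<not> nonnegative (?R xs)" if "\<not> nonnegative xs" for xs
    using visits_flip_from[OF first_visit[OF that]] that by (simp add: nonnegative_iff_no_visit)
  have few_ones_negative: "\<not> nonnegative xs" if "length xs = L" "ones xs + a < L" for xs
    using that assms height_eq_ones[of xs] by (auto simp: nonnegative_def)
  show "bij_betw ?R {xs. length xs = L \<and> \<not> nonnegative xs \<and> a \<le> ones xs}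
      {xs. length xs = L \<and> ones xs + a < L}"
    by (rule bij_betw_byWitness[where f' = ?R])
      (use R_R R_negative few_ones_negative ones_flip_from_visit_minus_one[OF first_visit] in
        \<open>fastforce simp del: One_nat_def\<close>)+
qed

lemma card_nonnegative_paths:
  assumes "L \<le> 2 * a"
  shows "card {xs. length xs = L \<and> nonnegative xs \<and> a \<le> ones xs} = L choose a"
proof -
  let ?A = "{xs. length xs = L \<and> a \<le> ones xs}"
  let ?greater = "{xs. length xs = L \<and> a < ones xs}"
  have "?A = {xs. length xs = L \<and> ones xs = a} \<union> ?greater"
    by auto
  then have "card ?A = (L choose a) + card ?greater"
    by (simp only:) (subst card_Un_disjoint; auto simp: finite_paths card_paths_ones)
  moreover have "?A = {xs. length xs = L \<and> nonnegative xs \<and> a \<le> ones xs}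
      \<union> {xs. length xs = L \<and> \<not> nonnegative xs \<and> a \<le> ones xs}"
    by auto
  then have "card ?A = card {xs. length xs = L \<and> nonnegative xs \<and> a \<le> ones xs}
      + card {xs. length xs = L \<and> \<not> nonnegative xs \<and> a \<le> ones xs}"
    by (simp only:) (subst card_Un_disjoint; auto simp: finite_paths)
  ultimately show ?thesis
    using card_negative_paths[OF assms] card_paths_ones_less_eq_card_paths_ones_greater by simp
qed

lemma nonnegative_flip_from_last_visit:
  assumes "nonnegative xs" "height xs < c" "visits c xs \<noteq> {}"
  shows "nonnegative (flip_from (Max (visits c xs)) xs)"
proof -
  define t where "t = Max (visits c xs)"
  have t: "t \<le> length xs" "height (take t xs) = c"
    using Max_in[OF finite_visits assms(3)] by (auto simp: t_def visits_def)
  have below: "height (take i xs) < c" if i: "t < i" "i \<le> length xs" for i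
  proof (rule ccontr)
    assume "\<not> height (take i xs) < c"
    then obtain k where "i \<le> k" "k \<le> length xs" "height (take k xs) = c"
      using height_take_intermediate[of i "length xs" xs c] i(2) assms(2) by force
    then have "k \<le> t"
      unfolding t_def by (intro Max_ge) (auto simp: visits_def)
    then show False
      using \<open>i \<le> k\<close> i(1) by simp
  qed
  have "0 \<le> c"
    using nonnegative_height[OF assms(1)] assms(2) by simp
  show ?thesis
    unfolding t_def[symmetric] nonnegative_def
  proof (intro allI impI)
    fix i assume "i \<le> length (flip_from t xs)"
    then show "0 \<le> height (take i (flip_from t xs))"
      using assms(1) below[of i] t \<open>0 \<le> c\<close>
      by (cases "i \<le> t") (auto simp: nonnegative_def height_take_flip_from)
  qed
qed

text \<open>Reflecting after the last visit to \<open>height xs + d\<close> injects the nonnegative walks that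
  overshoot their final height by \<open>d\<close> into the nonnegative walks ending at height \<open>\<ge> 2d\<close>.\<close>

lemma card_overshooting_paths:
  assumes "0 < d"
  shows "card {xs. length xs = 2 * p \<and> nonnegative xs \<and> visits (height xs + int d) xs \<noteq> {}}
    \<le> (2 * p) choose (p + d)"
proof -
  let ?O = "{xs. length xs = 2 * p \<and> nonnegative xs \<and> visits (height xs + int d) xs \<noteq> {}}"
  let ?T = "{xs. length xs = 2 * p \<and> nonnegative xs \<and> p + d \<le> ones xs}"
  let ?\<Phi> = "\<lambda>xs. flip_from (Max (visits (height xs + int d) xs)) xs"
  have last_visit: "Max (visits (height xs + int d) xs) \<in> visits (height xs + int d) xs"
    if "xs \<in> ?O" for xs
    using that by simp
  have height_\<Phi>: "height (?\<Phi> xs) = height xs + 2 * int d" if "xs \<in> ?O" for xs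
    using height_flip_from[OF last_visit[OF that]] by simp
  have \<Phi>_inverse: "flip_from (Max (visits (height xs + int d) (?\<Phi> xs))) (?\<Phi> xs) = xs"
    if "xs \<in> ?O" for xs
    using visits_flip_from[OF last_visit[OF that]] by simp
  have "inj_on ?\<Phi> ?O"
  proof (rule inj_onI)
    fix xs ys assume xs: "xs \<in> ?O" and ys: "ys \<in> ?O" and eq: "?\<Phi> xs = ?\<Phi> ys"
    then have "height xs = height ys"
      using height_\<Phi>[OF xs] height_\<Phi>[OF ys] by simp
    then show "xs = ys"
      using \<Phi>_inverse[OF xs] \<Phi>_inverse[OF ys] eq by metis
  qed
  moreover have "?\<Phi> ` ?O \<subseteq> ?T"
  proof
    fix ys assume "ys \<in> ?\<Phi> ` ?O"
    then obtain xs where xs: "xs \<in> ?O" and ys: "ys = ?\<Phi> xs" by blast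
    have "nonnegative ys"
      using xs ys assms nonnegative_flip_from_last_visit[of xs "height xs + int d"] by simp
    moreover have "2 * int d \<le> height ys"
      using xs nonnegative_height[of xs] height_\<Phi>[OF xs] unfolding ys by simp
    moreover have "length ys = 2 * p"
      using xs ys by simp
    ultimately show "ys \<in> ?T"
      using height_eq_ones[of ys] by simp
  qed
  ultimately have "card ?O \<le> card ?T"
    by (rule card_inj_on_le[OF _ _ finite_paths])
  also have "\<dots> = (2 * p) choose (p + d)"
    by (rule card_nonnegative_paths) simp
  finally show ?thesis .
qed

section \<open>Bidirectional ballot sequences from pairs of walks\<close>

lemma bidirectional_ballot_iff_heights:
  "bidirectional_ballot w \<longleftrightarrow>
    (\<forall>k. 1 \<le> k \<and> k \<le> length w \<longrightarrow> 0 < height (take k w)) \<and>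
    (\<forall>k < length w. height (take k w) < height w)"
proof -
  have prefix: "zeros (take m w) < ones (take m w) \<longleftrightarrow> 0 < height (take m w)" for m
    using height_eq_ones_minus_zeros[of "take m w"] by linarith
  have suffix: "zeros (drop m w) < ones (drop m w) \<longleftrightarrow> height (take m w) < height w" for m
    using height_drop[of m w] height_eq_ones_minus_zeros[of "drop m w"] by linarith
  have "(\<forall>k. 1 \<le> k \<and> k \<le> length w \<longrightarrow> height (take (length w - k) w) < height w) \<longleftrightarrow>
      (\<forall>k < length w. height (take k w) < height w)"
  proof (intro iffI allI impI)
    fix k assume "\<forall>k. 1 \<le> k \<and> k \<le> length w \<longrightarrow> height (take (length w - k) w) < height w"
      and "k < length w"
    then show "height (take k w) < height w"
      by (auto dest: spec[of _ "length w - k"])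
  qed auto
  then show ?thesis
    unfolding bidirectional_ballot_def prefix suffix by blast
qed

lemma bidirectional_ballot_wrap:
  assumes "\<And>j. j \<le> length z \<Longrightarrow> 0 \<le> height (take j z) \<and> height (take j z) \<le> height z"
  shows "bidirectional_ballot (True # z @ [True])"
proof -
  have take_wrap: "height (take (Suc j) (True # z @ [True])) = 1 + height (take j z)"
    if "j \<le> length z" for j
    using that by simp
  have "0 \<le> height z"
    using assms[of 0] by simp
  show ?thesis
    unfolding bidirectional_ballot_iff_heights
  proof (intro conjI allI impI)
    fix k assume k: "1 \<le> k \<and> k \<le> length (True # z @ [True])"
    then obtain j where j: "k = Suc j" "j \<le> Suc (length z)"
      by (cases k) auto
    show "0 < height (take k (True # z @ [True]))"
    proof (cases "j \<le> length z")
      case True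
      then show ?thesis using j take_wrap assms by fastforce
    qed (use j \<open>0 \<le> height z\<close> in simp)
  next
    fix k assume k: "k < length (True # z @ [True])"
    show "height (take k (True # z @ [True])) < height (True # z @ [True])"
    proof (cases k)
      case (Suc j)
      then show ?thesis using k take_wrap[of j] assms[of j] by simp
    qed (use \<open>0 \<le> height z\<close> in simp)
  qed
qed

lemma bidirectional_ballot_snoc:
  assumes "bidirectional_ballot w"
  shows "bidirectional_ballot (w @ [True])"
proof -
  have "0 \<le> height w"
    using assms unfolding bidirectional_ballot_iff_heights
    by (cases w) (auto dest: spec[of _ "length w"])
  then show ?thesis
    using assms unfolding bidirectional_ballot_iff_heights
    by (auto simp: le_Suc_eq less_Suc_eq)
qed

lemma B_mono: "m \<le> n \<Longrightarrow> B m \<le> B n"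
proof (induction n rule: dec_induct)
  case (step n)
  have "card {w. length w = n \<and> bidirectional_ballot w}
      \<le> card {w. length w = Suc n \<and> bidirectional_ballot w}"
    by (rule card_inj_on_le[OF _ _ finite_paths, of "\<lambda>w. w @ [True]"])
      (auto simp: inj_on_def bidirectional_ballot_snoc)
  then show ?case
    using step.IH unfolding B_def by simp
qed simp

definition ballot_halves :: "nat \<Rightarrow> nat \<Rightarrow> bool list set" where
  "ballot_halves p q = {xs. length xs = 2 * p \<and> 2 * int q \<le> height xs \<and>
     (\<forall>i \<le> length xs. 0 \<le> height (take i xs) \<and> height (take i xs) \<le> height xs + 2 * int q)}"

lemma ballot_halves_append_rev:
  assumes xs: "xs \<in> ballot_halves p q" and ys: "ys \<in> ballot_halves p q"
    and j: "j \<le> length (xs @ rev ys)"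
  shows "0 \<le> height (take j (xs @ rev ys)) \<and> height (take j (xs @ rev ys)) \<le> height (xs @ rev ys)"
proof (cases "j \<le> length xs")
  case True
  then show ?thesis
    using xs ys by (auto simp: ballot_halves_def)
next
  case False
  define m where "m = length ys - (j - length xs)"
  have "take j (xs @ rev ys) = xs @ rev (drop m ys)"
    using False unfolding m_def by (simp add: take_rev)
  then have "height (take j (xs @ rev ys)) = height xs + height ys - height (take m ys)"
    by (simp add: height_drop)
  moreover have "m \<le> length ys"
    unfolding m_def by simp
  ultimately show ?thesis
    using xs ys by (auto simp: ballot_halves_def)
qed

lemma card_ballot_halves_squared: "card (ballot_halves p q) ^ 2 \<le> B (4 * p + 2)"
proof -
  let ?glue = "\<lambda>(xs, ys). True # (xs @ rev ys) @ [True]"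
  have "inj_on ?glue (ballot_halves p q \<times> ballot_halves p q)"
    by (rule inj_onI) (auto simp: ballot_halves_def append_eq_append_conv)
  moreover have "?glue ` (ballot_halves p q \<times> ballot_halves p q)
      \<subseteq> {w. length w = 4 * p + 2 \<and> bidirectional_ballot w}"
  proof clarify
    fix xs ys assume xs: "xs \<in> ballot_halves p q" and ys: "ys \<in> ballot_halves p q"
    then have "bidirectional_ballot (True # (xs @ rev ys) @ [True])"
      by (intro bidirectional_ballot_wrap ballot_halves_append_rev)
    moreover have "length xs = 2 * p" "length ys = 2 * p"
      using xs ys by (simp_all add: ballot_halves_def)
    ultimately show "length (True # (xs @ rev ys) @ [True]) = 4 * p + 2 \<and>
        bidirectional_ballot (True # (xs @ rev ys) @ [True])"
      by simp
  qed
  ultimately have "card (ballot_halves p q \<times> ballot_halves p q) \<le> B (4 * p + 2)"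
    unfolding B_def by (rule card_inj_on_le[OF _ _ finite_paths])
  then show ?thesis
    by (simp add: card_cartesian_product power2_eq_square)
qed

lemma card_ballot_halves_lower:
  "(2 * p) choose (p + q) \<le> card (ballot_halves p q) + ((2 * p) choose (p + (2 * q + 1)))"
proof -
  let ?N = "{xs. length xs = 2 * p \<and> nonnegative xs \<and> p + q \<le> ones xs}"
  let ?O = "{xs. length xs = 2 * p \<and> nonnegative xs \<and> visits (height xs + int (2 * q + 1)) xs \<noteq> {}}"
  have "?N \<subseteq> ballot_halves p q \<union> ?O"
  proof
    fix xs assume xs: "xs \<in> ?N"
    have "height (take i xs) \<le> height xs + 2 * int q"
      if "i \<le> length xs" "xs \<notin> ?O" for i
    proof (rule ccontr)
      assume "\<not> ?thesis"
      then obtain k where "k \<le> length xs" "height (take k xs) = height xs + int (2 * q + 1)"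
        using height_take_intermediate[of i "length xs" xs "height xs + int (2 * q + 1)"] that(1)
        by force
      then show False
        using xs that(2) by (auto simp: visits_def)
    qed
    then show "xs \<in> ballot_halves p q \<union> ?O"
      using xs height_eq_ones[of xs] by (auto simp: ballot_halves_def nonnegative_def)
  qed
  then have "card ?N \<le> card (ballot_halves p q \<union> ?O)"
    by (intro card_mono) (simp_all add: ballot_halves_def finite_paths)
  also have "\<dots> \<le> card (ballot_halves p q) + card ?O"
    by (rule card_Un_le)
  finally have "card ?N \<le> card (ballot_halves p q) + card ?O" .
  moreover have "card ?N = (2 * p) choose (p + q)"
    by (rule card_nonnegative_paths) simp
  moreover have "card ?O \<le> (2 * p) choose (p + (2 * q + 1))"
    by (rule card_overshooting_paths) simp
  ultimately show ?thesis
    by linarith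
qed

section \<open>Estimates for binomial coefficients\<close>

lemma Suc_times_binomial_Suc: "Suc k * (n choose Suc k) = (n - k) * (n choose k)"
  using binomial_absorption[of k n] binomial_absorb_comp[of n k] by simp

lemma binomial_above_centre_step:
  assumes "j \<le> p"
  shows "(real p + real j + 1) * real ((2 * p) choose (p + j + 1))
    = (real p - real j) * real ((2 * p) choose (p + j))"
proof -
  have "real (Suc (p + j) * ((2 * p) choose Suc (p + j))) = real ((2 * p - (p + j)) * ((2 * p) choose (p + j)))"
    by (simp only: Suc_times_binomial_Suc)
  then show ?thesis
    using assms by (simp add: of_nat_diff algebra_simps)
qed

lemma binomial_gap_lower:
  assumes "j < p"
  shows "real (2 * j + 1) / real p * real ((2 * p) choose (p + j + 1))
    \<le> real ((2 * p) choose (p + j)) - real ((2 * p) choose (p + j + 1))"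
proof -
  define a b where "a = real ((2 * p) choose (p + j))" and "b = real ((2 * p) choose (p + j + 1))"
  have "(real p + real j + 1) * b = (real p - real j) * a"
    using binomial_above_centre_step[of j p] assms by (simp add: a_def b_def)
  then have "a - b = real (2 * j + 1) / (real p - real j) * b"
    using assms by (simp add: field_simps)
  moreover have "real (2 * j + 1) / real p * b \<le> real (2 * j + 1) / (real p - real j) * b"
    using assms by (intro mult_right_mono divide_left_mono) (auto simp: b_def)
  ultimately show ?thesis
    by (simp add: a_def b_def)
qed

lemma binomial_drop_lower:
  assumes "q + m \<le> p"
  shows "real m * real (2 * q + 1) / real p * real ((2 * p) choose (p + q + m))
    \<le> real ((2 * p) choose (p + q)) - real ((2 * p) choose (p + q + m))"
  using assms
proof (induction m)
  case (Suc m)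
  define c where "c k = real ((2 * p) choose k)" for k
  define K where "K = real (2 * q + 1) / real p"
  have antimono: "c (p + q + m + 1) \<le> c (p + q + m)"
    unfolding c_def using Suc.prems by (intro of_nat_mono binomial_antimono) auto
  have "K * c (p + q + m + 1) \<le> real (2 * (q + m) + 1) / real p * c (p + q + m + 1)"
    unfolding K_def c_def by (intro mult_right_mono divide_right_mono) auto
  also have "\<dots> \<le> c (p + q + m) - c (p + q + m + 1)"
    using binomial_gap_lower[of "q + m" p] Suc.prems unfolding c_def by (simp add: add.assoc)
  finally have gap: "K * c (p + q + m + 1) \<le> c (p + q + m) - c (p + q + m + 1)" .
  have "real m * K * c (p + q + m + 1) \<le> real m * K * c (p + q + m)"
    using antimono by (intro mult_left_mono) (auto simp: K_def)
  also have "\<dots> \<le> c (p + q) - c (p + q + m)"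
    using Suc unfolding c_def K_def by simp
  finally have "real m * K * c (p + q + m + 1) \<le> c (p + q) - c (p + q + m)" .
  moreover have "real (Suc m) * real (2 * q + 1) / real p = real m * K + K"
    unfolding K_def by (simp add: add_divide_distrib[symmetric] algebra_simps)
  ultimately show ?case
    using gap unfolding c_def by (simp add: algebra_simps add.assoc)
qed simp

lemma binomial_near_centre_lower:
  assumes "t \<le> p"
  shows "real ((2 * p) choose p) * (1 - real t ^ 2 / real p) \<le> real ((2 * p) choose (p + t))"
  using assms
proof (induction t)
  case (Suc t)
  define C a where "C = real ((2 * p) choose p)" and "a = real ((2 * p) choose (p + t))"
  have "(real p + real t + 1) * real ((2 * p) choose (p + t + 1)) = (real p - real t) * a"
    using binomial_above_centre_step[of t p] Suc.prems by (simp add: a_def)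
  then have step: "real ((2 * p) choose (p + Suc t)) = a - real (2 * t + 1) / (real p + real t + 1) * a"
    by (simp add: field_simps)
  have "real (2 * t + 1) / (real p + real t + 1) * a \<le> real (2 * t + 1) / real p * C"
    using Suc.prems binomial_maximum'[of p "p + t"]
    by (intro mult_mono divide_left_mono) (auto simp: a_def C_def)
  moreover have "C * (1 - real t ^ 2 / real p) \<le> a"
    using Suc unfolding a_def C_def by simp
  moreover have "C * (1 - real (Suc t) ^ 2 / real p) = C * (1 - real t ^ 2 / real p) - real (2 * t + 1) / real p * C"
    using Suc.prems by (simp add: field_simps power2_eq_square)
  ultimately show ?case
    unfolding step C_def by linarith
qed simp

lemma central_binomial_Suc:
  "Suc p * ((2 * Suc p) choose Suc p) = 2 * (2 * p + 1) * ((2 * p) choose p)"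
proof -
  define X Y where "X = (2 * Suc p) choose Suc p" and "Y = Suc (2 * p) choose Suc p"
  have "Suc p * X = (2 * Suc p) * Y"
    using Suc_times_binomial[of p "Suc (2 * p)"] binomial_symmetric[of p "Suc (2 * p)"]
    by (simp add: X_def Y_def del: binomial_Suc_Suc)
  then have "Suc p * X = Suc p * (2 * Y)"
    by (simp only: ac_simps)
  then have "X = 2 * Y"
    using mult_left_cancel[of "Suc p" X "2 * Y"] by simp
  moreover have "Suc p * Y = (2 * p + 1) * ((2 * p) choose p)"
    using Suc_times_binomial[of p "2 * p"] by (simp add: Y_def del: binomial_Suc_Suc)
  ultimately show ?thesis
    unfolding X_def by (metis mult.left_commute mult.assoc)
qed

lemma central_binomial_squared_lower:
  assumes "1 \<le> p"
  shows "16 ^ p \<le> 4 * real p * real ((2 * p) choose p) ^ 2"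
  using assms
proof (induction p rule: dec_induct)
  case (step p)
  define c c' where "c = real ((2 * p) choose p)" and "c' = real ((2 * Suc p) choose Suc p)"
  have "16 ^ Suc p * (real p + 1) = 16 * (real p + 1) * 16 ^ p"
    by simp
  also have "\<dots> \<le> 16 * (real p + 1) * (4 * real p * c ^ 2)"
    using step.IH by (intro mult_left_mono) (auto simp: c_def)
  also have "\<dots> \<le> 16 * c ^ 2 * (2 * real p + 1) ^ 2"
    by (simp add: power2_eq_square algebra_simps mult_left_mono)
  also have "\<dots> = 4 * ((real p + 1) * c') ^ 2"
    using arg_cong[OF central_binomial_Suc[of p], of real] unfolding c_def c'_def
    by (simp add: power2_eq_square algebra_simps del: binomial_Suc_Suc)
  also have "\<dots> = 4 * (real p + 1) * c' ^ 2 * (real p + 1)"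
    by (simp add: power2_eq_square)
  finally have "16 ^ Suc p \<le> 4 * (real p + 1) * c' ^ 2"
    by (rule mult_right_le_imp_le) simp
  then show ?case
    unfolding c'_def by (simp add: algebra_simps del: binomial_Suc_Suc)
qed simp

lemma central_binomial_le_ballot_halves:
  assumes q_small: "2 * (2 * q + 1) ^ 2 \<le> p" and q_large: "p \<le> 16 * (q + 1) ^ 2"
  shows "real ((2 * p) choose p) \<le> 32 * real (card (ballot_halves p q))"
proof -
  define c where "c k = real ((2 * p) choose k)" for k
  have p: "2 * q + 1 \<le> p" "0 < p"
    using q_small by (auto intro: order_trans[OF _ q_small] simp: power2_eq_square)
  have halves: "c (p + q) \<le> real (card (ballot_halves p q)) + c (p + 2 * q + 1)"
    using card_ballot_halves_lower[of p q] unfolding c_def by (simp add: add.assoc flip: of_nat_add)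
  have drop: "real (q + 1) * real (2 * q + 1) / real p * c (p + 2 * q + 1) \<le> c (p + q) - c (p + 2 * q + 1)"
    using binomial_drop_lower[of q "q + 1" p] p
    unfolding c_def by (simp add: add.assoc flip: mult_2)
  have factor: "1 / 16 \<le> real (q + 1) * real (2 * q + 1) / real p"
  proof -
    have "p \<le> 16 * ((q + 1) * (2 * q + 1))"
      using q_large by (simp add: power2_eq_square)
    then have "real p \<le> 16 * (real (q + 1) * real (2 * q + 1))"
      by (metis of_nat_le_iff of_nat_mult of_nat_numeral)
    then show ?thesis
      using p by (simp add: field_simps)
  qed
  have near_centre: "c p / 2 \<le> c (p + 2 * q + 1)"
  proof -
    have "2 * real (2 * q + 1) ^ 2 \<le> real p"
      using q_small by (metis of_nat_le_iff of_nat_mult of_nat_numeral of_nat_power)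
    then have "real (2 * q + 1) ^ 2 / real p \<le> 1 / 2"
      using p by (simp add: field_simps)
    then have "c p / 2 \<le> c p * (1 - real (2 * q + 1) ^ 2 / real p)"
      using mult_left_mono[of "1 / 2" "1 - real (2 * q + 1) ^ 2 / real p" "c p"] by (simp add: c_def)
    also have "\<dots> \<le> c (p + 2 * q + 1)"
      using binomial_near_centre_lower[of "2 * q + 1" p] p unfolding c_def by (simp add: add.assoc)
    finally show ?thesis .
  qed
  have "c p / 32 \<le> 1 / 16 * c (p + 2 * q + 1)"
    using near_centre by simp
  also have "\<dots> \<le> real (q + 1) * real (2 * q + 1) / real p * c (p + 2 * q + 1)"
    using factor by (intro mult_right_mono) (simp_all add: c_def)
  also have "\<dots> \<le> real (card (ballot_halves p q))"
    using halves drop by linarith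
  finally show ?thesis
    by (simp add: c_def)
qed

lemma ballot_parameter_exists:
  fixes p :: nat
  assumes "64 \<le> p"
  obtains q where "2 * (2 * q + 1) ^ 2 \<le> p" "p \<le> 16 * (q + 1) ^ 2"
proof
  define s where "s = floor_sqrt p"
  define r where "r = s div 4"
  have "2 \<le> r"
    using assms le_floor_sqrtI[of 8 p] by (simp add: r_def s_def)
  then have "2 * r \<le> r * r"
    by (intro mult_right_mono) simp_all
  moreover have "2 * (2 * r + 1) ^ 2 = 8 * (r * r) + 8 * r + 2" "(4 * r) ^ 2 = 16 * (r * r)"
    by (simp_all add: power2_eq_square algebra_simps)
  ultimately have "2 * (2 * r + 1) ^ 2 \<le> (4 * r) ^ 2"
    using \<open>2 \<le> r\<close> by linarith
  also have "\<dots> \<le> s ^ 2"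
    by (intro power_mono) (simp_all add: r_def)
  also have "\<dots> \<le> p"
    by (simp add: s_def)
  finally show "2 * (2 * r + 1) ^ 2 \<le> p" .
  have "p < (s + 1) ^ 2"
    using Suc_floor_sqrt_power2_gt[of p] by (simp add: s_def)
  also have "\<dots> \<le> (4 * (r + 1)) ^ 2"
    by (intro power_mono) (simp_all add: r_def)
  also have "\<dots> = 16 * (r + 1) ^ 2"
    by (simp add: power2_eq_square algebra_simps)
  finally show "p \<le> 16 * (r + 1) ^ 2"
    by simp
qed

lemma B_lower_bound:
  assumes "64 \<le> p"
  shows "16 ^ p / (4096 * real p) \<le> real (B (4 * p + 2))"
proof -
  obtain q where q: "2 * (2 * q + 1) ^ 2 \<le> p" "p \<le> 16 * (q + 1) ^ 2"
    using ballot_parameter_exists[OF assms] .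
  define c where "c = real ((2 * p) choose p)"
  have "16 ^ p / (4096 * real p) \<le> c ^ 2 / 1024"
    using central_binomial_squared_lower[of p] assms by (simp add: c_def field_simps)
  also have "\<dots> = (c / 32) ^ 2"
    by (simp add: power_divide)
  also have "\<dots> \<le> real (card (ballot_halves p q)) ^ 2"
    using central_binomial_le_ballot_halves[OF q] by (intro power_mono) (simp_all add: c_def)
  also have "\<dots> \<le> real (B (4 * p + 2))"
    using card_ballot_halves_squared[of p q] by (simp flip: of_nat_power)
  finally show ?thesis .
qed

theorem proposition13:
  shows "(\<lambda>n. real (B n)) \<in> \<Omega>(\<lambda>n. 2 ^ n / real n)"
proof (rule landau_omega.bigI[of "1 / 32768"])
  show "\<forall>\<^sub>F n in at_top. 1 / 32768 * norm (2 ^ n / real n :: real) \<le> norm (real (B n))"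
    unfolding eventually_at_top_linorder
  proof (intro exI allI impI)
    fix n :: nat assume n: "258 \<le> n"
    define p where "p = (n - 2) div 4"
    have p: "64 \<le> p" "4 * p + 2 \<le> n" "n \<le> 4 * p + 5"
      using n by (auto simp: p_def)
    have "(2::real) ^ n \<le> 2 ^ (4 * p + 5)"
      using p by (intro power_increasing) auto
    then have "1 / 32768 * (2 ^ n / real n) \<le> 1 / 32768 * (32 * 16 ^ p / (4 * real p))"
      using p by (intro mult_left_mono frac_le) (auto simp: power_add power_mult)
    also have "\<dots> = 16 ^ p / (4096 * real p)"
      by simp
    also have "\<dots> \<le> real (B (4 * p + 2))"
      using B_lower_bound[OF p(1)] .
    also have "\<dots> \<le> real (B n)"
      using B_mono[OF p(2)] by simp
    finally show "1 / 32768 * norm (2 ^ n / real n :: real) \<le> norm (real (B n))"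
      by simp
  qed
qed simp

end
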